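(* (a) Let $p=\prod_{i\in I}\Phi_{m_i}$ be a product of cyclotomic polynomials. Then $p(1)\equiv1\pmod2$ if and only if all $m_i\in\mathbb Z_{\ge1}-\{2^k\mid k\in\mathbb Z_{\ge0}\}$. (b) Let $\Lambda$ be a $\mathbb Z$-lattice with an automorphism $M_h$ of finite order, and let $\Lambda^{(1)}\subset\Lambda$ be an $M_h$-invariant sublattice with $[\Lambda:\Lambda^{(1)}]=2$. Write the characteristic polynomial $p_\Lambda=p_1p_2$ with $p_j=\prod_{m\in J_j}\Phi_m$, where $J_1\subset\mathbb Z_{\ge1}-\{2^k\mid k\in\mathbb Z_{\ge0}\}$ and $J_2\subset\{2^k\mid k\in\mathbb Z_{\ge0}\}$. Then $J_2\ne\emptyset$, $p_2\ne1$, $\Lambda_p=\Lambda^{(1)}_p$ for every $p$ with $p\mid p_1$, and $[\Lambda_p:\Lambda^{(1)}_p]=2$ for every $p$ with $p_2\mid p$ (here $p$ ranges over products of cyclotomic polynomials dividing $p_\Lambda$).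
   Context: $\Phi_n$ is the $n$-th cyclotomic polynomial. For an $M_h$-invariant sublattice $B$ and a product $p$ of cyclotomic polynomials dividing the characteristic polynomial of $M_h$ on $B$, $B_p:=(\bigoplus_{\lambda:p(\lambda)=0}B_\lambda)\cap B$, with $B_\lambda=\ker(M_h-\lambda)\subset B\otimes\mathbb C$. *)

theory Defs
  imports "Jordan_Normal_Form.Char_Poly" "HOL-Library.Multiset"
begin

definition cyclotomic_C :: "nat \<Rightarrow> complex poly" where
  "cyclotomic_C n = (\<Prod>k\<in>{k. k < n \<and> coprime k n}. [: - cis (2 * pi * real k / real n), 1 :])"

definition cyclotomic :: "nat \<Rightarrow> int poly" where
  "cyclotomic n = (THE q. map_poly of_int q = cyclotomic_C n)"

definition is_pow2 :: "nat \<Rightarrow> bool" where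
  "is_pow2 m \<longleftrightarrow> (\<exists>k. m = 2 ^ k)"

definition cyclo_prod :: "nat multiset \<Rightarrow> int poly" where
  "cyclo_prod K = (\<Prod>m\<in>#K. cyclotomic m)"

(* sum of the eigenspaces ker(M - lambda) in C^n over the roots lambda of p *)
definition eig_sum :: "nat \<Rightarrow> complex mat \<Rightarrow> complex poly \<Rightarrow> complex vec set" where
  "eig_sum n M p = {foldr (+) vs (0\<^sub>v n) | vs.
      \<forall>v\<in>set vs. v \<in> carrier_vec n \<and> (\<exists>c. poly p c = 0 \<and> M *\<^sub>v v = c \<cdot>\<^sub>v v)}"

(* B_p := (sum of B_lambda over roots of p) intersected with B, B \<subseteq> Z^n *)
definition lat_part :: "nat \<Rightarrow> int mat \<Rightarrow> int poly \<Rightarrow> int vec set \<Rightarrow> int vec set" where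
  "lat_part n M p B = {v \<in> B. map_vec of_int v \<in> eig_sum n (map_mat of_int M) (map_poly of_int p)}"

definition lat_index :: "int vec set \<Rightarrow> int vec set \<Rightarrow> nat" where
  "lat_index A B = card {{x + y | y. y \<in> B} | x. x \<in> A}"

end

theory Submission
  imports Defs
begin

text \<open>
  (a) Comparing X^m - 1 = prod_(d | m) Phi_d with X^s - 1 for s | m gives
  prod_(d | m, d not dividing s) Phi_d = 1 + X^s + ... + X^(m-s). With s the 2-part of m,
  Phi_m(1) therefore divides the odd part of m unless m is a power of 2, while Phi_1(1) = 0 and
  Phi_(2^(i+1)) = 1 + X^(2^i).

  (b) Write the order of M as 2^a r with r odd and let A = M^(2^a). Since L1 has index 2 and is
  M-invariant, x + A x + ... + A^(r-1) x lies in L1 iff x does. This sum annihilates every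
  eigenvector whose eigenvalue c satisfies c^(2^a) ~= 1, so lattice vectors built from eigenvectors
  for roots of p1 lie in L1. For x outside L1 the sum y is fixed by A and lies outside L1; splitting
  repeatedly into the eigenspaces of the two square roots writes y as a sum of eigenvectors with
  eigenvalues of 2-power order, i.e. roots of p2. Hence y lies in Lambda_p - L1 whenever p2 | p,
  and any two elements of Lambda_p outside L1 differ by an element of L1.
\<close>

section \<open>Cyclotomic polynomials\<close>

definition primitive_roots :: "nat \<Rightarrow> complex set" where
  "primitive_roots d = (\<lambda>k. cis (2 * pi * real k / real d)) ` {k. k < d \<and> coprime k d}"

lemma cis_eq_1_iff: "cis x = 1 \<longleftrightarrow> cos x = 1"
proof
  assume "cos x = 1"
  then have "sin x = 0"
    using sin_cos_squared_add[of x] by simp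
  with \<open>cos x = 1\<close> show "cis x = 1"
    by (simp add: complex_eq_iff)
qed (metis cis.sel(1) one_complex.sel(1))

lemma cis_2pi_eq_1_iff: "cis (2 * pi * t) = 1 \<longleftrightarrow> t \<in> \<int>"
proof -
  have "cis (2 * pi * t) = 1 \<longleftrightarrow> (\<exists>m::int. 2 * pi * t = of_int m * 2 * pi)"
    by (simp only: cis_eq_1_iff cos_one_2pi_int)
  also have "\<dots> \<longleftrightarrow> t \<in> \<int>"
    by (auto elim!: Ints_cases)
  finally show ?thesis .
qed

lemma of_nat_divide_in_Ints_iff: "(d::nat) > 0 \<Longrightarrow> real x / real d \<in> \<int> \<longleftrightarrow> d dvd x"
proof
  assume "d > 0" "real x / real d \<in> \<int>"
  then obtain m where "real x = of_int m * real d"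
    by (auto elim!: Ints_cases simp: divide_eq_eq)
  then have "int x = m * int d"
    by (metis of_int_eq_iff of_int_mult of_int_of_nat_eq)
  then show "d dvd x"
    by (metis dvd_triv_right int_dvd_int_iff)
qed (auto simp: real_of_nat_div)

lemma cis_pow_eq_1_iff:
  "d > 0 \<Longrightarrow> cis (2 * pi * real k / real d) ^ N = 1 \<longleftrightarrow> d dvd k * N"
  using cis_2pi_eq_1_iff[of "real (k * N) / real d"] of_nat_divide_in_Ints_iff[of d "k * N"]
  by (simp add: DeMoivre mult_ac)

lemma primitive_root_pow_eq_1_iff:
  "z \<in> primitive_roots d \<Longrightarrow> z ^ N = 1 \<longleftrightarrow> d dvd N"
  unfolding primitive_roots_def
  by (auto simp: cis_pow_eq_1_iff coprime_commute coprime_dvd_mult_right_iff)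

lemma cyclotomic_C_eq_prod_primitive_roots:
  "cyclotomic_C d = (\<Prod>z\<in>primitive_roots d. [:-z, 1:])"
proof (cases "d = 0")
  case False
  then have "inj_on (\<lambda>k. cis (2 * pi * real k / real d)) {k. k < d \<and> coprime k d}"
    using bij_betw_roots_unity[of d] by (auto simp: bij_betw_def inj_on_def)
  then show ?thesis
    unfolding cyclotomic_C_def primitive_roots_def by (simp add: prod.reindex)
qed (simp add: cyclotomic_C_def primitive_roots_def)

lemma poly_cyclotomic_C_eq_0_iff: "poly (cyclotomic_C d) z = 0 \<longleftrightarrow> z \<in> primitive_roots d"
  by (simp add: cyclotomic_C_eq_prod_primitive_roots poly_prod prod_zero_iff primitive_roots_def)

lemma lead_coeff_cyclotomic_C: "lead_coeff (cyclotomic_C d) = 1"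
  by (simp add: cyclotomic_C_eq_prod_primitive_roots lead_coeff_prod)

lemma primitive_roots_disjoint: "d \<noteq> e \<Longrightarrow> primitive_roots d \<inter> primitive_roots e = {}"
  using primitive_root_pow_eq_1_iff by (metis disjoint_iff dvd_antisym dvd_refl)

lemma roots_unity_eq_Union_primitive_roots:
  assumes "m > 0"
  shows "{z::complex. z ^ m = 1} = (\<Union>d\<in>{d. d dvd m}. primitive_roots d)"
proof
  show "(\<Union>d\<in>{d. d dvd m}. primitive_roots d) \<subseteq> {z. z ^ m = 1}"
    using primitive_root_pow_eq_1_iff by blast
next
  show "{z::complex. z ^ m = 1} \<subseteq> (\<Union>d\<in>{d. d dvd m}. primitive_roots d)"
  proof
    fix z :: complex
    assume "z \<in> {z. z ^ m = 1}"
    then obtain j where j: "j < m" "z = cis (2 * pi * real j / real m)"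
      using bij_betw_roots_unity[OF assms] unfolding bij_betw_def by auto
    define g where "g = gcd j m"
    define d where "d = m div g"
    define i where "i = j div g"
    have "g > 0" "m = d * g" "j = i * g"
      using assms by (simp_all add: g_def d_def i_def)
    then have "i < d" "z = cis (2 * pi * real i / real d)"
      using j by (simp_all add: field_simps)
    moreover have "coprime i d"
      unfolding g_def d_def i_def using assms by (intro div_gcd_coprime) simp
    ultimately have "z \<in> primitive_roots d"
      unfolding primitive_roots_def by auto
    moreover have "d dvd m"
      using \<open>m = d * g\<close> by simp
    ultimately show "z \<in> (\<Union>d\<in>{d. d dvd m}. primitive_roots d)"
      by blast
  qed
qed

lemma monom_minus_1_eq_prod_roots_unity:
  assumes "m > 0"
  shows "(monom 1 m - 1 :: complex poly) = (\<Prod>z\<in>{z. z ^ m = 1}. [:-z, 1:])"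
proof -
  let ?p = "monom 1 m - 1 :: complex poly"
  have "rsquarefree ?p"
    unfolding rsquarefree_roots
  proof (intro allI notI)
    fix z
    assume "poly ?p z = 0 \<and> poly (pderiv ?p) z = 0"
    then show False
      using assms by (auto simp: pderiv_diff pderiv_monom poly_monom power_0_left)
  qed
  moreover have "lead_coeff (-1 + monom 1 m :: complex poly) = 1"
    using assms by (subst lead_coeff_add_le) (simp_all add: degree_monom_eq)
  then have "lead_coeff ?p = 1"
    by (metis diff_conv_add_uminus add.commute)
  ultimately show ?thesis
    using complex_poly_decompose_rsquarefree[of ?p] by (simp add: poly_monom)
qed

lemma monom_minus_1_eq_prod_cyclotomic_C:
  assumes "m > 0"
  shows "(monom 1 m - 1 :: complex poly) = (\<Prod>d\<in>{d. d dvd m}. cyclotomic_C d)"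
proof -
  have "(\<Prod>d\<in>{d. d dvd m}. cyclotomic_C d) = (\<Prod>d\<in>{d. d dvd m}. \<Prod>z\<in>primitive_roots d. [:-z, 1:])"
    by (simp add: cyclotomic_C_eq_prod_primitive_roots)
  also have "\<dots> = (\<Prod>z\<in>(\<Union>d\<in>{d. d dvd m}. primitive_roots d). [:-z, 1:])"
    using assms primitive_roots_disjoint
    by (intro prod.UNION_disjoint[symmetric]) (auto simp: primitive_roots_def)
  finally show ?thesis
    using assms by (simp add: monom_minus_1_eq_prod_roots_unity roots_unity_eq_Union_primitive_roots)
qed

lemma of_int_poly_quotient_by_monic:
  fixes p q :: "int poly" and r :: "complex poly"
  assumes q: "lead_coeff q = 1" and pqr: "of_int_poly p = of_int_poly q * r"
  shows "\<exists>s. of_int_poly s = r"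
proof -
  obtain s t where st: "pseudo_divmod p q = (s, t)"
    by force
  have "q \<noteq> 0"
    using q by auto
  with pseudo_divmod[OF this st] q have "p = q * s + t" and t: "t = 0 \<or> degree t < degree q"
    by auto
  then have "of_int_poly q * (r - of_int_poly s) = (of_int_poly t :: complex poly)"
    using pqr by (simp add: of_int_poly_hom.hom_add of_int_poly_hom.hom_mult algebra_simps)
  show ?thesis
  proof (rule ccontr)
    assume "\<nexists>s. of_int_poly s = r"
    then have "r - of_int_poly s \<noteq> 0" and "(of_int_poly q :: complex poly) \<noteq> 0"
      using \<open>q \<noteq> 0\<close> by auto
    then have "degree t = degree q + degree (r - of_int_poly s) \<and> t \<noteq> 0"
      using degree_mult_eq \<open>of_int_poly q * (r - of_int_poly s) = of_int_poly t\<close>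
      by (metis mult_eq_0_iff of_int_hom.degree_map_poly_hom of_int_poly_hom.hom_zero)
    with t show False
      by simp
  qed
qed

lemma exists_int_poly_cyclotomic_C: "\<exists>q. of_int_poly q = cyclotomic_C m"
proof (induction m rule: less_induct)
  case (less m)
  show ?case
  proof (cases "m = 0")
    case True
    then show ?thesis
      by (intro exI[of _ 1]) (simp add: cyclotomic_C_def)
  next
    case False
    define D where "D = {d. d dvd m} - {m}"
    have "\<forall>d\<in>D. \<exists>q. of_int_poly q = cyclotomic_C d"
      using False by (intro ballI less.IH) (auto simp: D_def dest: dvd_imp_le)
    then obtain f where f: "\<And>d. d \<in> D \<Longrightarrow> of_int_poly (f d) = cyclotomic_C d"
      by metis
    have Q: "of_int_poly (\<Prod>d\<in>D. f d) = (\<Prod>d\<in>D. cyclotomic_C d)"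
      by (simp add: of_int_poly_hom.hom_prod f)
    then have "lead_coeff (of_int_poly (\<Prod>d\<in>D. f d) :: complex poly) = 1"
      by (simp add: lead_coeff_prod lead_coeff_cyclotomic_C)
    then have "lead_coeff (\<Prod>d\<in>D. f d) = 1"
      by simp
    moreover have "(monom 1 m - 1 :: complex poly) = cyclotomic_C m * (\<Prod>d\<in>D. cyclotomic_C d)"
      using False unfolding monom_minus_1_eq_prod_cyclotomic_C[OF \<open>m \<noteq> 0\<close>[unfolded neq0_conv]] D_def
      by (subst prod.remove[of _ m]) auto
    then have "of_int_poly (monom 1 m - 1) = of_int_poly (\<Prod>d\<in>D. f d) * cyclotomic_C m"
      by (simp add: Q of_int_poly_hom.hom_minus mult.commute)
    ultimately show ?thesis
      by (rule of_int_poly_quotient_by_monic)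
  qed
qed

lemma of_int_poly_cyclotomic: "of_int_poly (cyclotomic m) = cyclotomic_C m"
  unfolding cyclotomic_def
proof (rule theI')
  show "\<exists>!q. of_int_poly q = cyclotomic_C m"
    using exists_int_poly_cyclotomic_C by (metis of_int_poly_hom.eq_iff)
qed

lemma poly_cyclotomic_C_of_int: "poly (cyclotomic_C m) (of_int x) = of_int (poly (cyclotomic m) x)"
  by (simp flip: of_int_poly_cyclotomic)

lemma monom_minus_1_mult_geometric_sum:
  "(monom 1 s - 1 :: 'a::comm_ring_1 poly) * (\<Sum>i<r. monom 1 (s * i)) = monom 1 (s * r) - 1"
  by (induction r) (simp_all add: algebra_simps mult_monom)

lemma prod_cyclotomic_C_divisors_not_dvd:
  assumes "m > 0" "s dvd m"
  shows "(\<Prod>d\<in>{d. d dvd m} - {d. d dvd s}. cyclotomic_C d) = (\<Sum>i<m div s. monom 1 (s * i))"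
proof -
  have "s > 0"
    using assms by auto
  have "(monom 1 s - 1) * (\<Prod>d\<in>{d. d dvd m} - {d. d dvd s}. cyclotomic_C d)
      = (\<Prod>d\<in>{d. d dvd m}. cyclotomic_C d)"
  proof -
    have "{d. d dvd s} \<subseteq> {d. d dvd m}" "finite {d. d dvd m}"
      using assms by (auto intro: dvd_trans)
    then show ?thesis
      using \<open>s > 0\<close> by (simp add: monom_minus_1_eq_prod_cyclotomic_C prod.subset_diff mult.commute)
  qed
  also have "\<dots> = (monom 1 s - 1) * (\<Sum>i<m div s. monom 1 (s * i))"
    using assms by (simp add: monom_minus_1_eq_prod_cyclotomic_C monom_minus_1_mult_geometric_sum)
  finally show ?thesis
    using \<open>s > 0\<close> by (simp add: monom_eq_1_iff)
qed

lemma exists_pow2_mult_odd: "(m::nat) > 0 \<Longrightarrow> \<exists>a r. m = 2 ^ a * r \<and> odd r"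
proof (induction m rule: less_induct)
  case (less m)
  show ?case
  proof (cases "odd m")
    case False
    then obtain m' where "m = 2 * m'"
      by blast
    with less.IH[of m'] less.prems obtain a r where "m' = 2 ^ a * r" "odd r"
      by auto
    with \<open>m = 2 * m'\<close> show ?thesis
      by (intro exI[of _ "Suc a"] exI[of _ r]) simp
  qed (metis power_0 mult_1)
qed

lemma poly_cyclotomic_pow2_1:
  "poly (cyclotomic (2 ^ k)) 1 = (if k = 0 then 0 else 2)"
proof (cases k)
  case 0
  have "cyclotomic_C 1 = [:-1, 1:]"
    by (simp add: cyclotomic_C_def)
  then have "(of_int (poly (cyclotomic 1) 1) :: complex) = 0"
    using poly_cyclotomic_C_of_int[of 1 1] by simp
  then show ?thesis
    using 0 by simp
next
  case (Suc i)
  have "(d::nat) dvd 2 ^ Suc i \<longleftrightarrow> d = 2 ^ Suc i \<or> d dvd 2 ^ i" for d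
    unfolding divides_primepow_nat[OF two_is_prime_nat] le_Suc_eq by blast
  moreover have "\<not> (2::nat) ^ Suc i dvd 2 ^ i"
    by (auto dest: dvd_imp_le)
  ultimately have "{d. d dvd 2 ^ Suc i} - {d. d dvd 2 ^ i} = {2 ^ Suc i :: nat}"
    by auto
  then have "cyclotomic_C (2 ^ Suc i) = 1 + monom 1 (2 ^ i)"
    using prod_cyclotomic_C_divisors_not_dvd[of "2 ^ Suc i" "2 ^ i"] by (simp add: numeral_2_eq_2)
  then have "(of_int (poly (cyclotomic (2 ^ k)) 1) :: complex) = 2"
    using Suc poly_cyclotomic_C_of_int[of "2 ^ k" 1] by (simp add: poly_monom)
  then show ?thesis
    using Suc by simp
qed

lemma odd_poly_cyclotomic_1:
  assumes "m > 0" and "\<not> is_pow2 m"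
  shows "odd (poly (cyclotomic m) 1)"
proof -
  obtain a r where m: "m = 2 ^ a * r" and "odd r"
    using exists_pow2_mult_odd[OF \<open>m > 0\<close>] by blast
  define D where "D = {d. d dvd m} - {d. d dvd 2 ^ a}"
  have "m \<in> D"
    using \<open>\<not> is_pow2 m\<close> by (auto simp: D_def is_pow2_def divides_primepow_nat[OF two_is_prime_nat])
  have "(of_int (\<Prod>d\<in>D. poly (cyclotomic d) 1) :: complex) = poly (\<Prod>d\<in>D. cyclotomic_C d) 1"
    by (simp add: poly_prod flip: poly_cyclotomic_C_of_int)
  also have "\<dots> = of_nat r"
    using \<open>m > 0\<close> m
    by (simp add: D_def prod_cyclotomic_C_divisors_not_dvd poly_sum poly_monom)
  finally have "(\<Prod>d\<in>D. poly (cyclotomic d) 1) = int r"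
    by (metis of_int_eq_iff of_int_of_nat_eq)
  moreover have "poly (cyclotomic m) 1 dvd (\<Prod>d\<in>D. poly (cyclotomic d) 1)"
    using \<open>m \<in> D\<close> \<open>m > 0\<close> by (intro dvd_prodI) (auto simp: D_def)
  ultimately have "poly (cyclotomic m) 1 dvd int r"
    by simp
  show ?thesis
  proof
    assume "even (poly (cyclotomic m) 1)"
    then have "even (int r)"
      using \<open>poly (cyclotomic m) 1 dvd int r\<close> by (rule dvd_trans)
    with \<open>odd r\<close> show False
      by simp
  qed
qed

lemma even_poly_cyclotomic_1_iff: "m > 0 \<Longrightarrow> even (poly (cyclotomic m) 1) \<longleftrightarrow> is_pow2 m"
proof
  assume "is_pow2 m"
  then obtain k where "m = 2 ^ k"
    by (auto simp: is_pow2_def)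
  then show "even (poly (cyclotomic m) 1)"
    by (simp add: poly_cyclotomic_pow2_1)
qed (use odd_poly_cyclotomic_1 in blast)

lemma odd_poly_cyclo_prod_1_iff:
  "\<forall>m\<in>#K. m \<ge> 1 \<Longrightarrow> odd (poly (cyclo_prod K) 1) \<longleftrightarrow> (\<forall>m\<in>#K. \<not> is_pow2 m)"
  unfolding cyclo_prod_def by (induction K) (auto simp: even_poly_cyclotomic_1_iff)

lemma poly_of_int_cyclo_prod_eq_0_iff:
  "poly (of_int_poly (cyclo_prod K)) z = (0::complex) \<longleftrightarrow> (\<exists>m\<in>#K. z \<in> primitive_roots m)"
  unfolding cyclo_prod_def
  by (induction K) (simp_all add: of_int_poly_hom.hom_mult of_int_poly_cyclotomic poly_cyclotomic_C_eq_0_iff)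

definition pow2_root_of_unity :: "complex \<Rightarrow> bool" where
  "pow2_root_of_unity z \<longleftrightarrow> (\<exists>j. z ^ 2 ^ j = 1)"

lemma pow2_root_of_unity_root_cyclo_prod:
  assumes "poly (of_int_poly (cyclo_prod K)) z = (0::complex)" and "pow2_root_of_unity z"
  shows "\<exists>m\<in>#K. is_pow2 m"
proof -
  obtain m j where "m \<in># K" "z \<in> primitive_roots m" "z ^ 2 ^ j = 1"
    using assms by (auto simp: poly_of_int_cyclo_prod_eq_0_iff pow2_root_of_unity_def)
  then have "m dvd 2 ^ j"
    by (simp add: primitive_root_pow_eq_1_iff)
  with \<open>m \<in># K\<close> show ?thesis
    by (auto simp: is_pow2_def divides_primepow_nat[OF two_is_prime_nat])
qed

section \<open>Power sums and sums of eigenvectors\<close>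

lemma pow_mat_add: "A \<in> carrier_mat n n \<Longrightarrow> A ^\<^sub>m (i + j) = A ^\<^sub>m i * A ^\<^sub>m j"
  by (induction j) (simp_all add: assoc_mult_mat[of _ n n _ n _ n])

lemma pow_mat_mult: "A \<in> carrier_mat n n \<Longrightarrow> A ^\<^sub>m (i * j) = (A ^\<^sub>m i) ^\<^sub>m j"
  by (induction j) (simp_all add: pow_mat_add add.commute[of i])

lemma pow_mat_Suc_mult_vec:
  assumes "A \<in> carrier_mat n n" and "x \<in> carrier_vec n"
  shows "A ^\<^sub>m Suc j *\<^sub>v x = A ^\<^sub>m j *\<^sub>v (A *\<^sub>v x)"
    and "A ^\<^sub>m Suc j *\<^sub>v x = A *\<^sub>v (A ^\<^sub>m j *\<^sub>v x)"
proof -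
  show "A ^\<^sub>m Suc j *\<^sub>v x = A ^\<^sub>m j *\<^sub>v (A *\<^sub>v x)"
    using assms by (simp add: assoc_mult_mat_vec[of _ n n _ n])
  have "A ^\<^sub>m Suc j = A * A ^\<^sub>m j"
    using assms pow_mat_add[of A n 1 j] by simp
  then show "A ^\<^sub>m Suc j *\<^sub>v x = A *\<^sub>v (A ^\<^sub>m j *\<^sub>v x)"
    using assms by (simp add: assoc_mult_mat_vec[of _ n n _ n])
qed

lemma pow_mat_mult_vec_eigen:
  assumes A: "A \<in> carrier_mat n n" and u: "u \<in> carrier_vec n" and Au: "A *\<^sub>v u = c \<cdot>\<^sub>v u"
  shows "A ^\<^sub>m j *\<^sub>v u = c ^ j \<cdot>\<^sub>v (u :: 'a::comm_ring_1 vec)"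
proof (cases "u = 0\<^sub>v n")
  case True
  then show ?thesis
    using A by (auto intro!: eq_vecI simp: scalar_prod_def)
next
  case False
  then have "eigenvector A u c"
    unfolding eigenvector_def using A u Au by auto
  then show ?thesis
    by (rule eigenvector_pow[OF A])
qed

fun power_sum_vec :: "nat \<Rightarrow> 'a::comm_ring_1 mat \<Rightarrow> nat \<Rightarrow> 'a vec \<Rightarrow> 'a vec" where
  "power_sum_vec n A 0 x = 0\<^sub>v n"
| "power_sum_vec n A (Suc r) x = x + A *\<^sub>v power_sum_vec n A r x"

lemma power_sum_vec_carrier [simp]:
  "A \<in> carrier_mat n n \<Longrightarrow> x \<in> carrier_vec n \<Longrightarrow> power_sum_vec n A r x \<in> carrier_vec n"
  by (induction r) auto

lemma power_sum_vec_Suc_right: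
  assumes A: "A \<in> carrier_mat n n" and x: "x \<in> carrier_vec n"
  shows "power_sum_vec n A (Suc r) x = power_sum_vec n A r x + A ^\<^sub>m r *\<^sub>v x"
proof (induction r)
  case (Suc r)
  have "power_sum_vec n A (Suc (Suc r)) x = x + A *\<^sub>v (power_sum_vec n A r x + A ^\<^sub>m r *\<^sub>v x)"
    using Suc by simp
  also have "\<dots> = x + (A *\<^sub>v power_sum_vec n A r x + A ^\<^sub>m Suc r *\<^sub>v x)"
    using mult_add_distrib_mat_vec[OF A power_sum_vec_carrier[OF A x] mult_mat_vec_carrier[OF pow_carrier_mat[OF A] x]]
    by (subst pow_mat_Suc_mult_vec(2)[OF A x]) simp
  also have "\<dots> = (x + A *\<^sub>v power_sum_vec n A r x) + A ^\<^sub>m Suc r *\<^sub>v x"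
    using A x by (metis assoc_add_vec mult_mat_vec_carrier pow_carrier_mat power_sum_vec_carrier)
  finally show ?case
    by simp
qed (use A x in auto)

lemma power_sum_vec_fixed:
  assumes A: "A \<in> carrier_mat n n" and x: "x \<in> carrier_vec n" and "A ^\<^sub>m r = 1\<^sub>m n"
  shows "A *\<^sub>v power_sum_vec n A r x = power_sum_vec n A r x"
proof -
  let ?s = "power_sum_vec n A r x"
  have s: "?s \<in> carrier_vec n"
    using A x by simp
  have eq: "A *\<^sub>v ?s + x = ?s + x"
    using power_sum_vec_Suc_right[OF A x, of r] assms
    by (simp add: comm_add_vec[OF x mult_mat_vec_carrier[OF A s]])
  have "(A *\<^sub>v ?s) $ i = ?s $ i" if "i < n" for i
  proof -
    have "(A *\<^sub>v ?s + x) $ i = (?s + x) $ i"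
      by (simp only: eq)
    then show ?thesis
      using A that carrier_vecD[OF x] carrier_vecD[OF s] by simp
  qed
  then show ?thesis
    using A s by (auto intro!: eq_vecI)
qed

lemma power_sum_vec_eigen:
  assumes A: "A \<in> carrier_mat n n" and u: "u \<in> carrier_vec n" and Au: "A *\<^sub>v u = c \<cdot>\<^sub>v u"
  shows "power_sum_vec n A r u = (\<Sum>i<r. c ^ i) \<cdot>\<^sub>v (u :: 'a::field vec)"
proof (induction r)
  case (Suc r)
  have "(\<Sum>i<Suc r. c ^ i) = 1 + c * (\<Sum>i<r. c ^ i)"
    by (subst sum.lessThan_Suc_shift) (simp add: sum_distrib_left)
  with Suc show ?case
    using u by (auto simp: mult_mat_vec[OF A u] Au algebra_simps intro!: eq_vecI)
qed (use u in auto)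

lemma power_sum_vec_add:
  assumes A: "A \<in> carrier_mat n n" and u: "u \<in> carrier_vec n" and v: "v \<in> carrier_vec n"
  shows "power_sum_vec n A r (u + v) = power_sum_vec n A r u + power_sum_vec n A r v"
  by (induction r) (use A u v in \<open>auto simp: mult_add_distrib_mat_vec intro!: eq_vecI\<close>)

lemma of_int_vec_add:
  "u \<in> carrier_vec n \<Longrightarrow> v \<in> carrier_vec n \<Longrightarrow>
    map_vec (of_int :: int \<Rightarrow> 'a::ring_1) (u + v) = map_vec of_int u + map_vec of_int v"
  by (auto intro!: eq_vecI)

lemma of_int_power_sum_vec:
  assumes A: "A \<in> carrier_mat n n" and x: "x \<in> carrier_vec n"
  shows "map_vec of_int (power_sum_vec n A r x)
    = power_sum_vec n (map_mat of_int A) r (map_vec (of_int :: int \<Rightarrow> 'a::comm_ring_1) x)"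
proof (induction r)
  case (Suc r)
  have "map_vec (of_int :: int \<Rightarrow> 'a) (power_sum_vec n A (Suc r) x)
      = map_vec of_int x + map_vec of_int (A *\<^sub>v power_sum_vec n A r x)"
    using A x by (simp add: of_int_vec_add)
  also have "\<dots> = map_vec of_int x + map_mat of_int A *\<^sub>v map_vec of_int (power_sum_vec n A r x)"
    using A x by (simp add: of_int_hom.mult_mat_vec_hom)
  finally show ?case
    using Suc by simp
qed (auto intro!: eq_vecI)

lemma power_sum_vec_zero: "A \<in> carrier_mat n n \<Longrightarrow> power_sum_vec n A r (0\<^sub>v n) = 0\<^sub>v n"
  by (induction r) auto

lemma foldr_add_vec_carrier:
  "\<forall>v\<in>set vs. v \<in> carrier_vec n \<Longrightarrow> foldr (+) vs (0\<^sub>v n) \<in> carrier_vec n"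
  by (induction vs) auto

lemma foldr_add_vec_append:
  assumes "\<forall>v\<in>set vs. v \<in> carrier_vec n" and "\<forall>v\<in>set ws. v \<in> carrier_vec n"
  shows "foldr (+) (vs @ ws) (0\<^sub>v n) = foldr (+) vs (0\<^sub>v n) + foldr (+) ws (0\<^sub>v n :: 'a::ab_group_add vec)"
  using assms by (induction vs) (auto simp: foldr_add_vec_carrier intro!: eq_vecI)

lemma foldr_add_vec_map_uminus:
  assumes "\<forall>v\<in>set vs. v \<in> carrier_vec n"
  shows "foldr (+) (map uminus vs) (0\<^sub>v n) = - foldr (+) vs (0\<^sub>v n :: 'a::ab_group_add vec)"
  using assms by (induction vs) (auto simp: foldr_add_vec_carrier[THEN carrier_vecD] intro!: eq_vecI)

lemma power_sum_vec_foldr_eq_0: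
  assumes A: "A \<in> carrier_mat n n"
    and "\<forall>v\<in>set vs. v \<in> carrier_vec n \<and> power_sum_vec n A r v = 0\<^sub>v n"
  shows "power_sum_vec n A r (foldr (+) vs (0\<^sub>v n)) = 0\<^sub>v n"
  using assms(2)
  by (induction vs) (auto simp: power_sum_vec_zero[OF A] power_sum_vec_add[OF A] foldr_add_vec_carrier)

lemma zero_mem_eig_sum: "0\<^sub>v n \<in> eig_sum n B p"
  unfolding eig_sum_def by (auto intro!: exI[of _ "[]"])

lemma eig_sum_add:
  assumes "u \<in> eig_sum n B p" and "v \<in> eig_sum n B p"
  shows "u + v \<in> eig_sum n B p"
proof -
  obtain us vs where "u = foldr (+) us (0\<^sub>v n)" "v = foldr (+) vs (0\<^sub>v n)"
    and "\<forall>w\<in>set us. w \<in> carrier_vec n \<and> (\<exists>c. poly p c = 0 \<and> B *\<^sub>v w = c \<cdot>\<^sub>v w)"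
    and "\<forall>w\<in>set vs. w \<in> carrier_vec n \<and> (\<exists>c. poly p c = 0 \<and> B *\<^sub>v w = c \<cdot>\<^sub>v w)"
    using assms unfolding eig_sum_def by blast
  then show ?thesis
    unfolding eig_sum_def
    by (intro CollectI exI[of _ "us @ vs"]) (auto simp: foldr_add_vec_append simp del: foldr_append)
qed

lemma eig_sum_uminus:
  assumes B: "B \<in> carrier_mat n n" and u: "u \<in> eig_sum n B p"
  shows "- u \<in> eig_sum n B p"
proof -
  obtain vs where u: "u = foldr (+) vs (0\<^sub>v n)"
    and vs: "\<forall>v\<in>set vs. v \<in> carrier_vec n \<and> (\<exists>c. poly p c = 0 \<and> B *\<^sub>v v = c \<cdot>\<^sub>v v)"
    using assms unfolding eig_sum_def by blast
  have "B *\<^sub>v (- v) = c \<cdot>\<^sub>v (- v)" if v: "v \<in> carrier_vec n" and Bv: "B *\<^sub>v v = c \<cdot>\<^sub>v v" for v c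
  proof (rule eq_vecI)
    fix i
    assume "i < dim_vec (c \<cdot>\<^sub>v - v)"
    moreover have "(B *\<^sub>v v) $ i = (c \<cdot>\<^sub>v v) $ i"
      by (simp only: Bv)
    ultimately show "(B *\<^sub>v - v) $ i = (c \<cdot>\<^sub>v - v) $ i"
      using B v by (simp add: scalar_prod_uminus_right)
  qed (use B v in auto)
  then have "\<forall>v\<in>set (map uminus vs). v \<in> carrier_vec n \<and> (\<exists>c. poly p c = 0 \<and> B *\<^sub>v v = c \<cdot>\<^sub>v v)"
    using vs by fastforce
  moreover have "- u = foldr (+) (map uminus vs) (0\<^sub>v n)"
    using vs by (simp add: u foldr_add_vec_map_uminus)
  ultimately show ?thesis
    unfolding eig_sum_def by blast
qed

lemma eigenvector_mem_eig_sum: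
  "v \<in> carrier_vec n \<Longrightarrow> B *\<^sub>v v = c \<cdot>\<^sub>v v \<Longrightarrow> poly p c = 0 \<Longrightarrow> v \<in> eig_sum n B p"
  unfolding eig_sum_def by (intro CollectI exI[of _ "[v]"]) auto

lemma eig_sum_eigenvector_summands:
  assumes "B \<in> carrier_mat n n" and "u \<in> eig_sum n B p"
  shows "\<exists>vs. u = foldr (+) vs (0\<^sub>v n) \<and> (\<forall>v\<in>set vs. \<exists>c. poly p c = 0 \<and> eigenvector B v c)"
proof -
  obtain vs where u: "u = foldr (+) vs (0\<^sub>v n)"
    and vs: "\<forall>v\<in>set vs. v \<in> carrier_vec n \<and> (\<exists>c. poly p c = 0 \<and> B *\<^sub>v v = c \<cdot>\<^sub>v v)"
    using assms unfolding eig_sum_def by blast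
  have "foldr (+) (filter (\<lambda>v. v \<noteq> 0\<^sub>v n) ws) (0\<^sub>v n) = foldr (+) ws (0\<^sub>v n)"
    if "\<forall>v\<in>set ws. v \<in> carrier_vec n" for ws :: "complex vec list"
    using that by (induction ws) (auto simp: foldr_add_vec_carrier)
  then have "u = foldr (+) (filter (\<lambda>v. v \<noteq> 0\<^sub>v n) vs) (0\<^sub>v n)"
    using u vs by simp
  with vs assms(1) show ?thesis
    by (intro exI[of _ "filter (\<lambda>v. v \<noteq> 0\<^sub>v n) vs"]) (auto simp: eigenvector_def)
qed

lemma eig_sum_mono:
  assumes "B \<in> carrier_mat n n" and "\<And>c. eigenvalue B c \<Longrightarrow> poly p c = 0 \<Longrightarrow> poly q c = 0"
  shows "eig_sum n B p \<subseteq> eig_sum n B q"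
proof
  fix u
  assume "u \<in> eig_sum n B p"
  then obtain vs where "u = foldr (+) vs (0\<^sub>v n)"
    and "\<forall>v\<in>set vs. \<exists>c. poly p c = 0 \<and> eigenvector B v c"
    using eig_sum_eigenvector_summands[OF assms(1)] by blast
  then show "u \<in> eig_sum n B q"
    using assms unfolding eig_sum_def eigenvalue_def eigenvector_def by blast
qed

lemma eig_sum_nonzero_imp_root:
  "u \<in> eig_sum n B p \<Longrightarrow> u \<noteq> 0\<^sub>v n \<Longrightarrow> \<exists>c. poly p c = 0"
  unfolding eig_sum_def by (auto simp: neq_Nil_conv)

lemma split_eigen_square:
  fixes D :: "complex mat"
  assumes D: "D \<in> carrier_mat n n" and y: "y \<in> carrier_vec n" and "d \<noteq> 0"
    and DDy: "D *\<^sub>v (D *\<^sub>v y) = (d * d) \<cdot>\<^sub>v y"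
  obtains y1 y2 where "y = y1 + y2" "y1 \<in> carrier_vec n" "y2 \<in> carrier_vec n"
    "D *\<^sub>v y1 = d \<cdot>\<^sub>v y1" "D *\<^sub>v y2 = (- d) \<cdot>\<^sub>v y2"
proof
  define z where "z = (1 / d) \<cdot>\<^sub>v (D *\<^sub>v y)"
  have z: "z \<in> carrier_vec n"
    using D y by (simp add: z_def)
  have Dz: "D *\<^sub>v z = d \<cdot>\<^sub>v y"
    using D y \<open>d \<noteq> 0\<close> by (simp add: z_def mult_mat_vec DDy smult_smult_assoc)
  show "y = (1/2) \<cdot>\<^sub>v (y + z) + (1/2) \<cdot>\<^sub>v (y - z)"
    using y z by (auto simp: field_simps intro!: eq_vecI)
  show "(1/2) \<cdot>\<^sub>v (y + z) \<in> carrier_vec n" "(1/2) \<cdot>\<^sub>v (y - z) \<in> carrier_vec n"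
    using y z by auto
  have dz: "d \<cdot>\<^sub>v z = D *\<^sub>v y"
    using D y \<open>d \<noteq> 0\<close> by (auto simp: z_def intro!: eq_vecI)
  have "(D *\<^sub>v z) $ i = d * y $ i" "d * z $ i = (D *\<^sub>v y) $ i" if "i < n" for i
    using arg_cong[OF Dz, of "\<lambda>v. v $ i"] arg_cong[OF dz, of "\<lambda>v. v $ i"] y z that by simp_all
  then show "D *\<^sub>v ((1/2) \<cdot>\<^sub>v (y + z)) = d \<cdot>\<^sub>v ((1/2) \<cdot>\<^sub>v (y + z))"
    and "D *\<^sub>v ((1/2) \<cdot>\<^sub>v (y - z)) = (- d) \<cdot>\<^sub>v ((1/2) \<cdot>\<^sub>v (y - z))"
    using D y z
    by (auto simp: mult_mat_vec mult_add_distrib_mat_vec mult_minus_distrib_mat_vec algebra_simps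
        intro!: eq_vecI)
qed

lemma pow2_eigenvector_mem_eig_sum:
  fixes B :: "complex mat"
  assumes B: "B \<in> carrier_mat n n"
  shows "y \<in> carrier_vec n \<Longrightarrow> c \<noteq> 0 \<Longrightarrow> B ^\<^sub>m 2 ^ a *\<^sub>v y = c \<cdot>\<^sub>v y \<Longrightarrow>
    y \<in> eig_sum n B (monom 1 (2 ^ a) - [:c:])"
proof (induction a arbitrary: y c)
  case 0
  then show ?case
    using B by (intro eigenvector_mem_eig_sum) (simp_all add: poly_monom)
next
  case (Suc a)
  define D where "D = B ^\<^sub>m 2 ^ a"
  define d where "d = csqrt c"
  have D: "D \<in> carrier_mat n n"
    using B by (simp add: D_def)
  have "d * d = c" "d \<noteq> 0"
    using \<open>c \<noteq> 0\<close> by (auto simp: d_def power2_eq_square[symmetric])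
  have "B ^\<^sub>m 2 ^ Suc a = D * D"
    using pow_mat_add[OF B, of "2 ^ a" "2 ^ a"] by (simp add: D_def mult_2)
  then have "D *\<^sub>v (D *\<^sub>v y) = (d * d) \<cdot>\<^sub>v y"
    using Suc.prems D \<open>d * d = c\<close> by (simp add: assoc_mult_mat_vec[of _ n n _ n])
  then obtain y1 y2 where y: "y = y1 + y2" "y1 \<in> carrier_vec n" "y2 \<in> carrier_vec n"
    "D *\<^sub>v y1 = d \<cdot>\<^sub>v y1" "D *\<^sub>v y2 = (- d) \<cdot>\<^sub>v y2"
    using split_eigen_square[OF D Suc.prems(1) \<open>d \<noteq> 0\<close>] by blast
  have mono: "eig_sum n B (monom 1 (2 ^ a) - [:e:]) \<subseteq> eig_sum n B (monom 1 (2 ^ Suc a) - [:c:])"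
    if "e * e = c" for e
    using B that by (intro eig_sum_mono) (auto simp: poly_monom power_mult power2_eq_square power_mult_distrib)
  have "y1 \<in> eig_sum n B (monom 1 (2 ^ a) - [:d:])"
    using Suc.IH[OF y(2) \<open>d \<noteq> 0\<close>] y(4) by (simp add: D_def)
  moreover have "y2 \<in> eig_sum n B (monom 1 (2 ^ a) - [:- d:])"
    using Suc.IH[OF y(3)] y(5) \<open>d \<noteq> 0\<close> by (simp add: D_def)
  ultimately show ?case
    using mono[of d] mono[of "- d"] \<open>d * d = c\<close> y(1) by (auto intro: eig_sum_add)
qed

lemma eigenvalue_pow_eq_1:
  assumes B: "B \<in> carrier_mat n n" and "B ^\<^sub>m k = 1\<^sub>m n" and "eigenvector B v c"
  shows "c ^ k = (1 :: 'a::field)"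
proof -
  have v: "v \<in> carrier_vec n" "v \<noteq> 0\<^sub>v n"
    using assms unfolding eigenvector_def by auto
  then obtain i where "i < n" "v $ i \<noteq> 0"
    by (metis carrier_vecD eq_vecI index_zero_vec(1,2))
  have "v = c ^ k \<cdot>\<^sub>v v"
    using eigenvector_pow[OF B assms(3), of k] assms(2) v by simp
  then have "v $ i = c ^ k * v $ i"
    using \<open>i < n\<close> v by (metis carrier_vecD index_smult_vec(1))
  with \<open>v $ i \<noteq> 0\<close> show ?thesis
    by simp
qed

lemma power_sum_vec_pow_eigen_eq_0:
  fixes B :: "'a::field mat"
  assumes B: "B \<in> carrier_mat n n" and u: "u \<in> carrier_vec n" and Bu: "B *\<^sub>v u = c \<cdot>\<^sub>v u"
    and "c ^ s \<noteq> 1" and "c ^ (s * r) = 1"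
  shows "power_sum_vec n (B ^\<^sub>m s) r u = 0\<^sub>v n"
proof -
  have "(\<Sum>i<r. (c ^ s) ^ i) = ((c ^ s) ^ r - 1) / (c ^ s - 1)"
    by (rule geometric_sum) fact
  also have "\<dots> = 0"
    using \<open>c ^ (s * r) = 1\<close> by (simp add: power_mult)
  finally show ?thesis
    using u power_sum_vec_eigen[OF pow_carrier_mat[OF B] u pow_mat_mult_vec_eigen[OF B u Bu]]
    by (auto intro!: eq_vecI)
qed

section \<open>Subgroups of index two\<close>

definition coset :: "int vec set \<Rightarrow> int vec \<Rightarrow> int vec set" where
  "coset H x = {x + y | y. y \<in> H}"

lemma lat_index_eq_card_coset: "lat_index A B = card (coset B ` A)"
  unfolding lat_index_def coset_def by (simp add: setcompr_eq_image)

locale vec_subgroup =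
  fixes n :: nat and H :: "int vec set"
  assumes subset_carrier: "H \<subseteq> carrier_vec n"
    and zero_mem: "0\<^sub>v n \<in> H"
    and add_mem: "x \<in> H \<Longrightarrow> y \<in> H \<Longrightarrow> x + y \<in> H"
    and uminus_mem: "x \<in> H \<Longrightarrow> - x \<in> H"
begin

lemma diff_mem: "x \<in> H \<Longrightarrow> y \<in> H \<Longrightarrow> x - y \<in> H"
  using add_mem[of x "- y"] uminus_mem[of y] subset_carrier
  by (metis (no_types, lifting) carrier_vecD minus_add_uminus_vec subsetD)

lemma mem_coset_iff: "x \<in> carrier_vec n \<Longrightarrow> z \<in> coset H x \<longleftrightarrow> z \<in> carrier_vec n \<and> z - x \<in> H"
proof
  assume x: "x \<in> carrier_vec n" and "z \<in> coset H x"
  then obtain y where "y \<in> H" "z = x + y"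
    unfolding coset_def by blast
  moreover have "y \<in> carrier_vec n"
    using \<open>y \<in> H\<close> subset_carrier by blast
  ultimately show "z \<in> carrier_vec n \<and> z - x \<in> H"
    using x by (auto intro!: eq_vecI elim!: back_subst[of "\<lambda>v. v \<in> H"])
next
  assume "x \<in> carrier_vec n" and "z \<in> carrier_vec n \<and> z - x \<in> H"
  then have "z = x + (z - x)" "z - x \<in> H"
    by (auto intro!: eq_vecI)
  then show "z \<in> coset H x"
    unfolding coset_def by blast
qed

lemma coset_eq_iff:
  assumes x: "x \<in> carrier_vec n" and x': "x' \<in> carrier_vec n"
  shows "coset H x = coset H x' \<longleftrightarrow> x - x' \<in> H"
proof
  assume "coset H x = coset H x'"
  moreover have "x \<in> coset H x"
    using x zero_mem by (simp add: mem_coset_iff)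
  ultimately show "x - x' \<in> H"
    using x' by (simp add: mem_coset_iff)
next
  assume "x - x' \<in> H"
  have "z - x \<in> H \<longleftrightarrow> z - x' \<in> H" if "z \<in> carrier_vec n" for z
  proof -
    have "z - x' = (z - x) + (x - x')" "z - x = (z - x') - (x - x')"
      using that x x' by (auto intro!: eq_vecI)
    then show ?thesis
      using \<open>x - x' \<in> H\<close> add_mem diff_mem by metis
  qed
  then show "coset H x = coset H x'"
    using x x' by (auto simp: mem_coset_iff)
qed

lemma coset_eq_self_iff: "x \<in> carrier_vec n \<Longrightarrow> coset H x = H \<longleftrightarrow> x \<in> H"
proof -
  assume x: "x \<in> carrier_vec n"
  have "coset H (0\<^sub>v n) = H"
    using subset_carrier by (auto simp: mem_coset_iff)
  then show ?thesis
    using coset_eq_iff[OF x zero_carrier_vec] x by simp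
qed

end

lemma vec_subgroup_Int: "vec_subgroup n G \<Longrightarrow> vec_subgroup n H \<Longrightarrow> vec_subgroup n (G \<inter> H)"
  unfolding vec_subgroup_def by blast

lemma lat_index_eq_2_iff:
  assumes G: "vec_subgroup n G" and H: "vec_subgroup n H" and "H \<subseteq> G"
  shows "lat_index G H = 2 \<longleftrightarrow> (\<exists>x\<in>G. x \<notin> H) \<and> (\<forall>x\<in>G. \<forall>y\<in>G. x \<notin> H \<longrightarrow> y \<notin> H \<longrightarrow> x - y \<in> H)"
proof -
  interpret G: vec_subgroup n G by fact
  interpret H: vec_subgroup n H by fact
  have carrier: "x \<in> carrier_vec n" if "x \<in> G" for x
    using that G.subset_carrier by blast
  have H_coset: "H \<in> coset H ` G"
    using G.zero_mem H.coset_eq_self_iff[of "0\<^sub>v n"] H.zero_mem by force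
  show ?thesis
  proof
    assume "lat_index G H = 2"
    then obtain C1 C2 where cosets: "coset H ` G = {C1, C2}" "C1 \<noteq> C2"
      by (auto simp: lat_index_eq_card_coset card_2_iff)
    then obtain x where "x \<in> G" "coset H x \<noteq> H"
      by (metis H_coset image_iff insert_iff)
    moreover have "x - y \<in> H" if "x \<in> G" "y \<in> G" "x \<notin> H" "y \<notin> H" for x y
    proof -
      have "coset H x \<noteq> H" "coset H y \<noteq> H"
        using that carrier H.coset_eq_self_iff by auto
      moreover have "coset H x \<in> {C1, C2}" "coset H y \<in> {C1, C2}" "H \<in> {C1, C2}"
        using cosets(1) H_coset that(1,2) by (metis imageI)+
      ultimately have "coset H x = coset H y"
        by auto
      then show ?thesis
        using that carrier H.coset_eq_iff by blast
    qed
    ultimately show "(\<exists>x\<in>G. x \<notin> H) \<and> (\<forall>x\<in>G. \<forall>y\<in>G. x \<notin> H \<longrightarrow> y \<notin> H \<longrightarrow> x - y \<in> H)"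
      using carrier H.coset_eq_self_iff by blast
  next
    assume "(\<exists>x\<in>G. x \<notin> H) \<and> (\<forall>x\<in>G. \<forall>y\<in>G. x \<notin> H \<longrightarrow> y \<notin> H \<longrightarrow> x - y \<in> H)"
    then obtain x0 where x0: "x0 \<in> G" "x0 \<notin> H"
      and diff: "\<And>x y. x \<in> G \<Longrightarrow> y \<in> G \<Longrightarrow> x \<notin> H \<Longrightarrow> y \<notin> H \<Longrightarrow> x - y \<in> H"
      by blast
    have "coset H ` G = {H, coset H x0}"
    proof
      show "coset H ` G \<subseteq> {H, coset H x0}"
      proof
        fix C
        assume "C \<in> coset H ` G"
        then obtain x where "x \<in> G" "C = coset H x"
          by blast
        then show "C \<in> {H, coset H x0}"
          using carrier x0 diff[of x x0] H.coset_eq_self_iff H.coset_eq_iff by (cases "x \<in> H") auto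
      qed
      show "{H, coset H x0} \<subseteq> coset H ` G"
        using H_coset x0 by blast
    qed
    moreover have "H \<noteq> coset H x0"
      using H.coset_eq_self_iff carrier x0 by metis
    ultimately show "lat_index G H = 2"
      by (simp add: lat_index_eq_card_coset)
  qed
qed

section \<open>Invariant sublattices of index two\<close>

lemma poly_of_int_poly_dvd_eq_0:
  "p dvd q \<Longrightarrow> poly (of_int_poly p) z = (0::complex) \<Longrightarrow> poly (of_int_poly q) z = 0"
  by (auto elim!: dvdE simp: of_int_poly_hom.hom_mult)

lemma eigenvalue_imp_root_of_int_char_poly:
  "M \<in> carrier_mat n n \<Longrightarrow> eigenvalue (map_mat of_int M) z \<Longrightarrow> poly (of_int_poly (char_poly M)) z = (0::complex)"
  by (metis eigenvalue_root_char_poly map_carrier_mat of_int_hom.char_poly_hom)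

lemma lat_part_eq_Int: "B \<subseteq> carrier_vec n \<Longrightarrow> lat_part n M p B = lat_part n M p (carrier_vec n) \<inter> B"
  unfolding lat_part_def by blast

lemma lat_part_mono:
  assumes "M \<in> carrier_mat n n" and "p dvd q"
  shows "lat_part n M p B \<subseteq> lat_part n M q B"
  using eig_sum_mono[of "map_mat of_int M" n "of_int_poly p" "of_int_poly q"] assms
  unfolding lat_part_def by (auto intro: poly_of_int_poly_dvd_eq_0)

lemma vec_subgroup_lat_part:
  assumes M: "M \<in> carrier_mat n n"
  shows "vec_subgroup n (lat_part n M p (carrier_vec n))"
proof
  fix x y
  assume "x \<in> lat_part n M p (carrier_vec n)" "y \<in> lat_part n M p (carrier_vec n)"
  then show "x + y \<in> lat_part n M p (carrier_vec n)"
    by (auto simp: lat_part_def of_int_vec_add eig_sum_add)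
next
  fix x
  assume "x \<in> lat_part n M p (carrier_vec n)"
  moreover have "map_vec (of_int :: int \<Rightarrow> complex) (- x) = - map_vec of_int x"
    by (auto intro!: eq_vecI)
  ultimately show "- x \<in> lat_part n M p (carrier_vec n)"
    using M by (auto simp: lat_part_def eig_sum_uminus)
qed (auto simp: lat_part_def zero_mem_eig_sum of_int_hom.vec_hom_zero)

locale index_two_sublattice = vec_subgroup n L for n L +
  fixes M :: "int mat" and k :: nat
  assumes M_carrier: "M \<in> carrier_mat n n"
    and k_pos: "k > 0"
    and M_pow_k: "M ^\<^sub>m k = 1\<^sub>m n"
    and M_mem: "x \<in> L \<Longrightarrow> M *\<^sub>v x \<in> L"
    and index_two: "lat_index (carrier_vec n) L = 2"
begin

lemma exists_not_mem: "\<exists>x\<in>carrier_vec n. x \<notin> L"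
  and diff_mem_if_not_mem: "x \<in> carrier_vec n \<Longrightarrow> y \<in> carrier_vec n \<Longrightarrow> x \<notin> L \<Longrightarrow> y \<notin> L \<Longrightarrow> x - y \<in> L"
  using index_two lat_index_eq_2_iff[of n "carrier_vec n" L] subset_carrier vec_subgroup_axioms
  by (auto simp: vec_subgroup_def)

lemma add_mem_iff:
  assumes x: "x \<in> carrier_vec n" and y: "y \<in> carrier_vec n"
  shows "x + y \<in> L \<longleftrightarrow> (x \<in> L \<longleftrightarrow> y \<in> L)"
proof -
  have "x = (x + y) - y" "y = (x + y) - x" "x + y = x - (- y)"
    using x y by (auto intro!: eq_vecI)
  then show ?thesis
    using x y diff_mem diff_mem_if_not_mem[of x "- y"] add_mem uminus_mem
    by (metis uminus_carrier_vec uminus_uminus_vec)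
qed

lemma mult_mat_vec_mem_iff:
  assumes x: "x \<in> carrier_vec n"
  shows "M *\<^sub>v x \<in> L \<longleftrightarrow> x \<in> L"
proof
  assume "M *\<^sub>v x \<in> L"
  have "M ^\<^sub>m j *\<^sub>v (M *\<^sub>v x) \<in> L" for j
  proof (induction j)
    case (Suc j)
    have "M ^\<^sub>m Suc j *\<^sub>v (M *\<^sub>v x) = M *\<^sub>v (M ^\<^sub>m j *\<^sub>v (M *\<^sub>v x))"
      using M_carrier x by (intro pow_mat_Suc_mult_vec(2)) auto
    then show ?case
      using Suc M_mem by simp
  qed (use \<open>M *\<^sub>v x \<in> L\<close> M_carrier x in simp)
  moreover obtain j where "k = Suc j"
    using k_pos gr0_implies_Suc by blast
  then have "x = M ^\<^sub>m j *\<^sub>v (M *\<^sub>v x)"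
    using pow_mat_Suc_mult_vec(1)[OF M_carrier x, of j] M_pow_k x by simp
  ultimately show "x \<in> L"
    by metis
qed (rule M_mem)

lemma pow_mat_mult_vec_mem_iff: "x \<in> carrier_vec n \<Longrightarrow> M ^\<^sub>m j *\<^sub>v x \<in> L \<longleftrightarrow> x \<in> L"
  by (induction j arbitrary: x)
    (use M_carrier in \<open>simp_all add: assoc_mult_mat_vec[of _ n n _ n] mult_mat_vec_mem_iff\<close>)

lemma power_sum_vec_mem_iff:
  assumes x: "x \<in> carrier_vec n"
  shows "power_sum_vec n (M ^\<^sub>m j) r x \<in> L \<longleftrightarrow> even r \<or> x \<in> L"
proof (induction r)
  case (Suc r)
  have "M ^\<^sub>m j \<in> carrier_mat n n"
    using M_carrier by simp
  then show ?case
    using Suc x by (auto simp: add_mem_iff pow_mat_mult_vec_mem_iff simp flip: pow_mat_mult[OF M_carrier])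
qed (simp add: zero_mem)

lemma of_int_mat_pow: "map_mat (of_int :: int \<Rightarrow> complex) (M ^\<^sub>m j) = map_mat of_int M ^\<^sub>m j"
  by (rule of_int_hom.mat_hom_pow[OF M_carrier])

lemma lat_part_eq_if_no_pow2_roots:
  assumes no_pow2: "\<And>c. poly (of_int_poly p) c = 0 \<Longrightarrow> \<not> pow2_root_of_unity c"
  shows "lat_part n M p (carrier_vec n) = lat_part n M p L"
proof -
  obtain a r where k: "k = 2 ^ a * r" and "odd r"
    using exists_pow2_mult_odd[OF k_pos] by blast
  let ?MC = "map_mat (of_int :: int \<Rightarrow> complex) M"
  have MC: "?MC \<in> carrier_mat n n" "?MC ^\<^sub>m k = 1\<^sub>m n"
    using M_carrier M_pow_k of_int_mat_pow[of k] by (auto simp: of_int_hom.mat_hom_one)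
  have "v \<in> L" if v: "v \<in> carrier_vec n" "map_vec of_int v \<in> eig_sum n ?MC (of_int_poly p)" for v
  proof -
    obtain vs where vs: "map_vec of_int v = foldr (+) vs (0\<^sub>v n)"
      and eig: "\<forall>u\<in>set vs. \<exists>c. poly (of_int_poly p) c = 0 \<and> eigenvector ?MC u c"
      using eig_sum_eigenvector_summands[OF MC(1) v(2)] by blast
    have "power_sum_vec n (?MC ^\<^sub>m 2 ^ a) r u = 0\<^sub>v n" if "u \<in> set vs" for u
    proof -
      obtain c where "poly (of_int_poly p) c = 0" "eigenvector ?MC u c"
        using eig \<open>u \<in> set vs\<close> by blast
      moreover have "c ^ (2 ^ a * r) = 1"
        using eigenvalue_pow_eq_1[OF MC \<open>eigenvector ?MC u c\<close>] k by simp
      ultimately show ?thesis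
        using no_pow2 MC(1) by (intro power_sum_vec_pow_eigen_eq_0[OF MC(1)])
          (auto simp: eigenvector_def pow2_root_of_unity_def)
    qed
    then have "power_sum_vec n (?MC ^\<^sub>m 2 ^ a) r (map_vec of_int v) = 0\<^sub>v n"
      using eig vs M_carrier by (auto simp: eigenvector_def intro!: power_sum_vec_foldr_eq_0)
    then have "map_vec (of_int :: int \<Rightarrow> complex) (power_sum_vec n (M ^\<^sub>m 2 ^ a) r v) = 0\<^sub>v n"
      by (simp add: of_int_power_sum_vec[OF pow_carrier_mat[OF M_carrier] v(1)] of_int_mat_pow)
    then have "power_sum_vec n (M ^\<^sub>m 2 ^ a) r v = 0\<^sub>v n"
      by simp
    then show "v \<in> L"
      using power_sum_vec_mem_iff[OF v(1)] zero_mem \<open>odd r\<close> by metis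
  qed
  then show ?thesis
    using subset_carrier unfolding lat_part_def by blast
qed

lemma exists_lat_part_not_mem:
  assumes pow2_roots: "\<And>c. eigenvalue (map_mat of_int M) c \<Longrightarrow> pow2_root_of_unity c \<Longrightarrow> poly (of_int_poly p) c = 0"
  shows "\<exists>y\<in>lat_part n M p (carrier_vec n). y \<notin> L"
proof -
  obtain a r where k: "k = 2 ^ a * r" and "odd r"
    using exists_pow2_mult_odd[OF k_pos] by blast
  obtain x where x: "x \<in> carrier_vec n" "x \<notin> L"
    using exists_not_mem by blast
  define A where "A = M ^\<^sub>m 2 ^ a"
  define y where "y = power_sum_vec n A r x"
  have A: "A \<in> carrier_mat n n"
    using M_carrier by (simp add: A_def)
  have y: "y \<in> carrier_vec n" "y \<notin> L"
    using A x power_sum_vec_mem_iff[OF x(1), of "2 ^ a" r] \<open>odd r\<close> by (simp_all add: y_def A_def)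
  have "A ^\<^sub>m r = 1\<^sub>m n"
    using M_pow_k k by (simp add: A_def pow_mat_mult[OF M_carrier])
  then have "A *\<^sub>v y = y"
    unfolding y_def by (rule power_sum_vec_fixed[OF A x(1)])
  then have "map_vec (of_int :: int \<Rightarrow> complex) (A *\<^sub>v y) = map_vec of_int y"
    by simp
  then have "map_mat of_int M ^\<^sub>m 2 ^ a *\<^sub>v map_vec of_int y = 1 \<cdot>\<^sub>v map_vec (of_int :: int \<Rightarrow> complex) y"
    using A y(1) by (simp add: of_int_hom.mult_mat_vec_hom A_def of_int_mat_pow)
  then have "map_vec of_int y \<in> eig_sum n (map_mat of_int M) (monom 1 (2 ^ a) - [:1:])"
    using M_carrier y(1) by (intro pow2_eigenvector_mem_eig_sum) auto
  also have "\<dots> \<subseteq> eig_sum n (map_mat of_int M) (of_int_poly p)"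
    using M_carrier pow2_roots by (intro eig_sum_mono) (auto simp: poly_monom pow2_root_of_unity_def)
  finally show ?thesis
    using y by (auto simp: lat_part_def)
qed

lemma root_if_lat_part_not_mem:
  assumes "y \<in> lat_part n M p (carrier_vec n)" and "y \<notin> L"
  shows "\<exists>z. poly (of_int_poly p) z = (0::complex)"
proof -
  have "map_vec of_int y \<in> eig_sum n (map_mat of_int M) (of_int_poly p)"
    "map_vec of_int y \<noteq> (0\<^sub>v n :: complex vec)"
    using assms zero_mem by (auto simp: lat_part_def)
  then show ?thesis
    by (rule eig_sum_nonzero_imp_root)
qed

lemma lat_index_lat_part:
  assumes "y \<in> lat_part n M p (carrier_vec n)" and "y \<notin> L"
  shows "lat_index (lat_part n M p (carrier_vec n)) (lat_part n M p L) = 2"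
proof -
  let ?G = "lat_part n M p (carrier_vec n)"
  interpret G: vec_subgroup n ?G
    by (rule vec_subgroup_lat_part[OF M_carrier])
  have L_eq: "lat_part n M p L = ?G \<inter> L"
    using subset_carrier by (rule lat_part_eq_Int)
  have "vec_subgroup n (?G \<inter> L)"
    using G.vec_subgroup_axioms vec_subgroup_axioms by (rule vec_subgroup_Int)
  moreover have "x - z \<in> ?G \<inter> L" if "x \<in> ?G" "z \<in> ?G" "x \<notin> L" "z \<notin> L" for x z
  proof -
    have "x \<in> carrier_vec n" "z \<in> carrier_vec n"
      using that(1,2) G.subset_carrier by auto
    then show ?thesis
      using that G.diff_mem diff_mem_if_not_mem by simp
  qed
  ultimately show ?thesis
    unfolding L_eq using lat_index_eq_2_iff[OF G.vec_subgroup_axioms] assms by blast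
qed

end

theorem lemma2p12:
  fixes n :: nat and M :: "int mat" and L1 :: "int vec set"
    and J1 J2 :: "nat multiset"
  assumes M_carr: "M \<in> carrier_mat n n"
    and M_fin: "\<exists>k>0. M ^\<^sub>m k = 1\<^sub>m n"
    and L1_sub: "L1 \<subseteq> carrier_vec n"
    and L1_zero: "0\<^sub>v n \<in> L1"
    and L1_add: "\<And>x y. x \<in> L1 \<Longrightarrow> y \<in> L1 \<Longrightarrow> x + y \<in> L1"
    and L1_neg: "\<And>x. x \<in> L1 \<Longrightarrow> - x \<in> L1"
    and L1_inv: "\<And>x. x \<in> L1 \<Longrightarrow> M *\<^sub>v x \<in> L1"
    and L1_index: "lat_index (carrier_vec n) L1 = 2"
    and J1: "\<forall>m\<in>#J1. m \<ge> 1 \<and> \<not> is_pow2 m"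
    and J2: "\<forall>m\<in>#J2. is_pow2 m"
    and fact: "char_poly M = cyclo_prod J1 * cyclo_prod J2"
  shows "(\<forall>K::nat multiset. (\<forall>m\<in>#K. m \<ge> 1) \<longrightarrow>
            (odd (poly (cyclo_prod K) 1) \<longleftrightarrow> (\<forall>m\<in>#K. \<not> is_pow2 m)))
       \<and> J2 \<noteq> {#}
       \<and> cyclo_prod J2 \<noteq> 1
       \<and> (\<forall>K::nat multiset. (\<forall>m\<in>#K. m \<ge> 1) \<and> cyclo_prod K dvd char_poly M
            \<and> cyclo_prod K dvd cyclo_prod J1 \<longrightarrow>
              lat_part n M (cyclo_prod K) (carrier_vec n) = lat_part n M (cyclo_prod K) L1)
       \<and> (\<forall>K::nat multiset. (\<forall>m\<in>#K. m \<ge> 1) \<and> cyclo_prod K dvd char_poly M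
            \<and> cyclo_prod J2 dvd cyclo_prod K \<longrightarrow>
              lat_index (lat_part n M (cyclo_prod K) (carrier_vec n))
                        (lat_part n M (cyclo_prod K) L1) = 2)"
proof -
  obtain k where "k > 0" "M ^\<^sub>m k = 1\<^sub>m n"
    using M_fin by blast
  then interpret index_two_sublattice n L1 M k
    by unfold_locales (use assms in auto)
  have J1_roots: "poly (of_int_poly (cyclo_prod J1)) z \<noteq> 0" if "pow2_root_of_unity z" for z
    using pow2_root_of_unity_root_cyclo_prod[OF _ that] J1 by blast
  have J2_roots: "poly (of_int_poly (cyclo_prod J2)) z = 0"
    if "eigenvalue (map_mat of_int M) z" "pow2_root_of_unity z" for z
    using eigenvalue_imp_root_of_int_char_poly[OF M_carr that(1)] J1_roots[OF that(2)] fact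
    by (simp add: of_int_poly_hom.hom_mult)
  obtain y where y: "y \<in> lat_part n M (cyclo_prod J2) (carrier_vec n)" "y \<notin> L1"
    using exists_lat_part_not_mem J2_roots by blast
  then obtain z where "poly (of_int_poly (cyclo_prod J2)) z = (0::complex)"
    using root_if_lat_part_not_mem by blast
  then have "J2 \<noteq> {#}" "cyclo_prod J2 \<noteq> 1"
    by (auto simp: cyclo_prod_def)
  moreover have "lat_part n M (cyclo_prod K) (carrier_vec n) = lat_part n M (cyclo_prod K) L1"
    if "cyclo_prod K dvd cyclo_prod J1" for K
    using J1_roots poly_of_int_poly_dvd_eq_0[OF that] by (intro lat_part_eq_if_no_pow2_roots) blast
  moreover have "lat_index (lat_part n M (cyclo_prod K) (carrier_vec n)) (lat_part n M (cyclo_prod K) L1) = 2"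
    if "cyclo_prod J2 dvd cyclo_prod K" for K
    using y lat_part_mono[OF M_carr that] by (intro lat_index_lat_part) auto
  ultimately show ?thesis
    using odd_poly_cyclo_prod_1_iff by blast
qed

end
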